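(* Let $X$ be a complex $V$-space and let $f:Y\to X$ be a $V$-morphism from a reduced complex space $Y$. Then $d^V_X(f(p),f(q))\le d_Y(p,q)$ for any pair of distinct points $p,q\in Y$, where $d_Y$ is the Kobayashi pseudo-distance of $Y$.
   Context: Complex $V$-space: a reduced complex space $X$ with a collection of local Galois covers $(\pi_\alpha:\tilde U_\alpha\to U_\alpha,G_\alpha)_{\alpha\in I}$ ($\tilde U_\alpha$ connected complex space, $G_\alpha$ finite group acting biholomorphically with $\tilde U_\alpha/G_\alpha\cong U_\alpha$ open in $X$), the $U_\alpha$ forming a basis of the topology, such that if $U_\alpha\subset U_\beta$ there is an open embedding $\tilde j_{\alpha\beta}:\tilde U_\alpha\to\tilde U_\beta$ over the inclusion, equivariant with respect to an injective homomorphism $G_\alpha\to G_\beta$. A holomorphic map $f:Y\to X$ is a $V$-morphism if each point of $Y$ has a neighbourhood $\Omega$ on which $f=\pi_\alpha\circ\tau$ for some $\alpha$ and holomorphic $\tau:\Omega\to\tilde U_\alpha$. The Kobayashi pseudo $V$-distance $d^V_X(p,q)$ is the infimum of $\sum_i\rho(a_i,b_i)$ over chains of $V$-morphisms $f_i:\mathbb{D}\to X$ connecting $p$ to $q$ ($f_1(a_1)=p$, $f_i(b_i)=f_{i+1}(a_{i+1})$, $f_m(b_m)=q$), $\rho$ the Poincaré distance on the unit disk $\mathbb{D}$. *)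

theory Defs
  imports "HOL-Analysis.Analysis" "HOL-Algebra.Group"
begin

text \<open>Points of C^n are encoded as functions nat => complex vanishing from index n on.
  With the product topology on nat => complex, the subspace topology on cn n is
  the usual topology of C^n.\<close>

definition cn :: "nat \<Rightarrow> (nat \<Rightarrow> complex) set" where
  "cn n = {z. \<forall>i\<ge>n. z i = 0}"

definition cn_open :: "nat \<Rightarrow> (nat \<Rightarrow> complex) set \<Rightarrow> bool" where
  "cn_open n U \<longleftrightarrow> openin (top_of_set (cn n)) U"

text \<open>Holomorphic function on an open subset of C^n (Osgood: continuous and
  holomorphic in each variable separately).\<close>
definition holo_fun :: "nat \<Rightarrow> (nat \<Rightarrow> complex) set \<Rightarrow> ((nat \<Rightarrow> complex) \<Rightarrow> complex) \<Rightarrow> bool" where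
  "holo_fun n U h \<longleftrightarrow> cn_open n U \<and> continuous_on U h \<and>
     (\<forall>z\<in>U. \<forall>i<n. (\<lambda>t. h (z(i := t))) field_differentiable (at (z i)))"

definition analytic_set :: "nat \<Rightarrow> (nat \<Rightarrow> complex) set \<Rightarrow> (nat \<Rightarrow> complex) set \<Rightarrow> bool" where
  "analytic_set n D A \<longleftrightarrow> cn_open n D \<and> A \<subseteq> D \<and>
     (\<forall>z\<in>D. \<exists>W k fs. z \<in> W \<and> W \<subseteq> D \<and> cn_open n W \<and>
        (\<forall>j<(k::nat). holo_fun n W (fs j)) \<and> A \<inter> W = {w\<in>W. \<forall>j<k. fs j w = 0})"

definition holo_on_set :: "nat \<Rightarrow> (nat \<Rightarrow> complex) set \<Rightarrow> ((nat \<Rightarrow> complex) \<Rightarrow> complex) \<Rightarrow> bool" where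
  "holo_on_set n S g \<longleftrightarrow>
     (\<forall>z\<in>S. \<exists>W F. z \<in> W \<and> holo_fun n W F \<and> (\<forall>w\<in>W \<inter> S. g w = F w))"

definition holo_map :: "nat \<Rightarrow> (nat \<Rightarrow> complex) set \<Rightarrow> nat \<Rightarrow> ((nat \<Rightarrow> complex) \<Rightarrow> (nat \<Rightarrow> complex)) \<Rightarrow> bool" where
  "holo_map n S m g \<longleftrightarrow> (\<forall>z\<in>S. g z \<in> cn m) \<and> (\<forall>i<m. holo_on_set n S (\<lambda>z. g z i))"

text \<open>A chart (U, phi, n, D, A): U open in the space, phi a homeomorphism of U onto
  an analytic subset A of an open set D of C^n.\<close>
type_synonym 'a chart =
  "'a set \<times> ('a \<Rightarrow> (nat \<Rightarrow> complex)) \<times> nat \<times> (nat \<Rightarrow> complex) set \<times> (nat \<Rightarrow> complex) set"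

type_synonym 'a cspace = "'a topology \<times> 'a chart set"

abbreviation ctop :: "'a cspace \<Rightarrow> 'a topology" where "ctop X \<equiv> fst X"
abbreviation catlas :: "'a cspace \<Rightarrow> 'a chart set" where "catlas X \<equiv> snd X"
abbreviation cpts :: "'a cspace \<Rightarrow> 'a set" where "cpts X \<equiv> topspace (fst X)"

definition is_cspace :: "'a cspace \<Rightarrow> bool" where
  "is_cspace X \<longleftrightarrow> Hausdorff_space (ctop X) \<and>
     (\<forall>x\<in>cpts X. \<exists>(U,\<phi>,n,D,A)\<in>catlas X. x \<in> U) \<and>
     (\<forall>(U,\<phi>,n,D,A)\<in>catlas X. openin (ctop X) U \<and> analytic_set n D A \<and>
         homeomorphic_map (subtopology (ctop X) U) (top_of_set A) \<phi>) \<and>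
     (\<forall>(U1,\<phi>1,n1,D1,A1)\<in>catlas X. \<forall>(U2,\<phi>2,n2,D2,A2)\<in>catlas X.
         holo_map n1 (\<phi>1 ` (U1 \<inter> U2)) n2 (\<lambda>z. \<phi>2 (inv_into U1 \<phi>1 z)))"

definition hol_map_on :: "'b cspace \<Rightarrow> 'b set \<Rightarrow> 'a cspace \<Rightarrow> ('b \<Rightarrow> 'a) \<Rightarrow> bool" where
  "hol_map_on Y Om X f \<longleftrightarrow> openin (ctop Y) Om \<and>
     continuous_map (subtopology (ctop Y) Om) (ctop X) f \<and>
     (\<forall>(U,\<phi>,n,D,A)\<in>catlas Y. \<forall>(V,\<psi>,m,E,B)\<in>catlas X.
        holo_map n (\<phi> ` {y\<in>U \<inter> Om. f y \<in> V}) m (\<lambda>z. \<psi> (f (inv_into U \<phi> z))))"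

definition hol_fun_on :: "'a cspace \<Rightarrow> 'a set \<Rightarrow> ('a \<Rightarrow> complex) \<Rightarrow> bool" where
  "hol_fun_on X W h \<longleftrightarrow> openin (ctop X) W \<and>
     (\<forall>(U,\<phi>,n,D,A)\<in>catlas X. holo_on_set n (\<phi> ` (U \<inter> W)) (\<lambda>z. h (inv_into U \<phi> z)))"

definition hol_open_embedding :: "'b cspace \<Rightarrow> 'a cspace \<Rightarrow> ('b \<Rightarrow> 'a) \<Rightarrow> bool" where
  "hol_open_embedding A B j \<longleftrightarrow> hol_map_on A (cpts A) B j \<and> inj_on j (cpts A) \<and>
     openin (ctop B) (j ` cpts A) \<and> hol_map_on B (j ` cpts A) A (inv_into (cpts A) j)"

definition disc_chart :: "complex \<Rightarrow> (nat \<Rightarrow> complex)" where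
  "disc_chart z = (\<lambda>i. if i = 0 then z else 0)"

definition disc_space :: "complex cspace" where
  "disc_space = (top_of_set (ball 0 1),
      {(ball 0 1, disc_chart, 1, disc_chart ` ball 0 1, disc_chart ` ball 0 1)})"

definition hol_group_action :: "'u cspace \<Rightarrow> ('g, 'm) monoid_scheme \<Rightarrow> ('g \<Rightarrow> 'u \<Rightarrow> 'u) \<Rightarrow> bool" where
  "hol_group_action Y G act \<longleftrightarrow> group G \<and> finite (carrier G) \<and>
     (\<forall>g\<in>carrier G. hol_map_on Y (cpts Y) Y (act g)) \<and>
     (\<forall>x\<in>cpts Y. act \<one>\<^bsub>G\<^esub> x = x) \<and>
     (\<forall>g\<in>carrier G. \<forall>h\<in>carrier G. \<forall>x\<in>cpts Y. act (g \<otimes>\<^bsub>G\<^esub> h) x = act g (act h x))"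

text \<open>pi : Ut -> X is a local Galois cover with group G, i.e. Ut/G is isomorphic
  (as a reduced complex space, i.e. topologically and on holomorphic functions)
  to the open set pi(Ut) of X.\<close>
definition galois_cover :: "'a cspace \<Rightarrow> 'u cspace \<Rightarrow> ('g, 'm) monoid_scheme \<Rightarrow>
    ('g \<Rightarrow> 'u \<Rightarrow> 'u) \<Rightarrow> ('u \<Rightarrow> 'a) \<Rightarrow> bool" where
  "galois_cover X Ut G act \<pi> \<longleftrightarrow>
     is_cspace Ut \<and> connected_space (ctop Ut) \<and> hol_group_action Ut G act \<and>
     openin (ctop X) (\<pi> ` cpts Ut) \<and>
     hol_map_on Ut (cpts Ut) X \<pi> \<and>
     (\<forall>x\<in>cpts Ut. \<forall>y\<in>cpts Ut. \<pi> x = \<pi> y \<longleftrightarrow> (\<exists>g\<in>carrier G. act g x = y)) \<and>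
     (\<forall>W. W \<subseteq> \<pi> ` cpts Ut \<longrightarrow>
        (openin (ctop X) W \<longleftrightarrow> openin (ctop Ut) {x\<in>cpts Ut. \<pi> x \<in> W})) \<and>
     (\<forall>W h. openin (ctop X) W \<and> W \<subseteq> \<pi> ` cpts Ut \<longrightarrow>
        (hol_fun_on X W h \<longleftrightarrow> hol_fun_on Ut {x\<in>cpts Ut. \<pi> x \<in> W} (\<lambda>x. h (\<pi> x))))"

definition is_Vspace :: "'a cspace \<Rightarrow> 'i set \<Rightarrow> ('i \<Rightarrow> 'u cspace) \<Rightarrow>
    ('i \<Rightarrow> ('g, 'm) monoid_scheme) \<Rightarrow> ('i \<Rightarrow> 'g \<Rightarrow> 'u \<Rightarrow> 'u) \<Rightarrow> ('i \<Rightarrow> 'u \<Rightarrow> 'a) \<Rightarrow> bool" where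
  "is_Vspace X I Ut G act \<pi> \<longleftrightarrow> is_cspace X \<and>
     (\<forall>\<alpha>\<in>I. galois_cover X (Ut \<alpha>) (G \<alpha>) (act \<alpha>) (\<pi> \<alpha>)) \<and>
     (\<forall>W. openin (ctop X) W \<longrightarrow>
        (\<forall>x\<in>W. \<exists>\<alpha>\<in>I. x \<in> \<pi> \<alpha> ` cpts (Ut \<alpha>) \<and> \<pi> \<alpha> ` cpts (Ut \<alpha>) \<subseteq> W)) \<and>
     (\<forall>\<alpha>\<in>I. \<forall>\<beta>\<in>I. \<pi> \<alpha> ` cpts (Ut \<alpha>) \<subseteq> \<pi> \<beta> ` cpts (Ut \<beta>) \<longrightarrow>
        (\<exists>j hm. hol_open_embedding (Ut \<alpha>) (Ut \<beta>) j \<and>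
           (\<forall>x\<in>cpts (Ut \<alpha>). \<pi> \<beta> (j x) = \<pi> \<alpha> x) \<and>
           hm \<in> hom (G \<alpha>) (G \<beta>) \<and> inj_on hm (carrier (G \<alpha>)) \<and>
           (\<forall>g\<in>carrier (G \<alpha>). \<forall>x\<in>cpts (Ut \<alpha>). j (act \<alpha> g x) = act \<beta> (hm g) (j x))))"

definition V_morphism :: "'b cspace \<Rightarrow> 'a cspace \<Rightarrow> 'i set \<Rightarrow> ('i \<Rightarrow> 'u cspace) \<Rightarrow>
    ('i \<Rightarrow> 'u \<Rightarrow> 'a) \<Rightarrow> ('b \<Rightarrow> 'a) \<Rightarrow> bool" where
  "V_morphism Y X I Ut \<pi> f \<longleftrightarrow> hol_map_on Y (cpts Y) X f \<and>
     (\<forall>y\<in>cpts Y. \<exists>Om \<alpha> \<tau>. y \<in> Om \<and> \<alpha> \<in> I \<and> hol_map_on Y Om (Ut \<alpha>) \<tau> \<and>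
        (\<forall>z\<in>Om. f z = \<pi> \<alpha> (\<tau> z)))"

definition poincare_dist :: "complex \<Rightarrow> complex \<Rightarrow> real" where
  "poincare_dist a b = artanh (cmod ((a - b) / (1 - cnj b * a)))"

definition kob_chain :: "((complex \<Rightarrow> 'a) \<Rightarrow> bool) \<Rightarrow> 'a \<Rightarrow> 'a \<Rightarrow>
    ((complex \<Rightarrow> 'a) \<times> complex \<times> complex) list \<Rightarrow> bool" where
  "kob_chain P p q L \<longleftrightarrow> L \<noteq> [] \<and>
     (\<forall>(g,a,b)\<in>set L. P g \<and> a \<in> ball 0 1 \<and> b \<in> ball 0 1) \<and>
     fst (hd L) (fst (snd (hd L))) = p \<and>
     fst (last L) (snd (snd (last L))) = q \<and>
     (\<forall>i. Suc i < length L \<longrightarrow>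
        fst (L ! i) (snd (snd (L ! i))) = fst (L ! Suc i) (fst (snd (L ! Suc i))))"

definition kob_dist :: "((complex \<Rightarrow> 'a) \<Rightarrow> bool) \<Rightarrow> 'a \<Rightarrow> 'a \<Rightarrow> ereal" where
  "kob_dist P p q = Inf {ereal (\<Sum>(g,a,b)\<leftarrow>L. poincare_dist a b) | L. kob_chain P p q L}"

definition kobayashi :: "'b cspace \<Rightarrow> 'b \<Rightarrow> 'b \<Rightarrow> ereal" where
  "kobayashi Y = kob_dist (\<lambda>g. hol_map_on disc_space (ball 0 1) Y g)"

definition kobayashi_V :: "'a cspace \<Rightarrow> 'i set \<Rightarrow> ('i \<Rightarrow> 'u cspace) \<Rightarrow>
    ('i \<Rightarrow> 'u \<Rightarrow> 'a) \<Rightarrow> 'a \<Rightarrow> 'a \<Rightarrow> ereal" where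
  "kobayashi_V X I Ut \<pi> = kob_dist (\<lambda>g. V_morphism disc_space X I Ut \<pi> g)"

end

theory Submission
  imports Defs "HOL-Complex_Analysis.Complex_Analysis"
begin

text \<open>
  Composing a holomorphic disc \<open>g\<close> in \<open>Y\<close> with the V-morphism \<open>f\<close> gives a V-morphism disc in \<open>X\<close>:
  near every point \<open>f = \<pi>\<^sub>\<alpha> \<circ> \<tau>\<close> with \<open>\<tau>\<close> holomorphic, so locally \<open>f \<circ> g = \<pi>\<^sub>\<alpha> \<circ> (\<tau> \<circ> g)\<close>.
  Hence every chain of holomorphic discs joining \<open>p\<close> to \<open>q\<close> is carried to a chain of V-morphism
  discs joining \<open>f p\<close> to \<open>f q\<close> with the same Poincare length.

  The work lies in composing holomorphic maps given by charts. Holomorphy on open subsets of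
  \<open>\<complex>\<^sup>n\<close> means continuity plus holomorphy in each variable separately, so everything reduces to
  a chain rule along holomorphic curves. It is proved by Osgood's argument: move from \<open>a\<close> to
  \<open>w\<close> one coordinate at a time and write each increment with Cauchy's formula for the divided
  difference, whose integrand depends continuously on the curve parameter.
\<close>

section \<open>Open subsets of \<open>\<complex>\<^sup>n\<close>\<close>

lemma cn_open_subset: "cn_open n W \<Longrightarrow> W \<subseteq> cn n"
  unfolding cn_open_def by (meson openin_imp_subset topspace_euclidean_subtopology)

lemma cn_open_Int_open: "cn_open n W \<Longrightarrow> open U \<Longrightarrow> cn_open n (W \<inter> U)"
  unfolding cn_open_def by (simp add: openin_Int_open)

lemma cn_fun_upd: "w \<in> cn n \<Longrightarrow> i < n \<Longrightarrow> w(i := t) \<in> cn n"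
  by (simp add: cn_def)

lemma continuous_on_fun_upd_line: "continuous_on S (\<lambda>t. w(i := t))"
proof (intro continuous_on_coordinatewise_then_product)
  fix j
  show "continuous_on S (\<lambda>t. (w(i := t)) j)"
    by (cases "j = i") (simp_all add: continuous_on_const continuous_on_id)
qed

lemma open_fun_upd_preimage:
  assumes "cn_open n U" "w \<in> cn n" "i < n"
  shows "open {t. w(i := t) \<in> U}"
proof -
  obtain V where "open V" "U = cn n \<inter> V"
    using assms(1) unfolding cn_open_def openin_open by blast
  then have "{t. w(i := t) \<in> U} = (\<lambda>t. w(i := t)) -` V"
    using cn_fun_upd[OF assms(2,3)] by auto
  with \<open>open V\<close> show ?thesis
    using open_vimage[OF _ continuous_on_fun_upd_line] by simp
qed

lemma cn_open_contains_polydisc: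
  assumes "cn_open n W" "a \<in> W"
  obtains r where "r > 0" "\<And>z. z \<in> cn n \<Longrightarrow> (\<forall>j<n. cmod (z j - a j) < r) \<Longrightarrow> z \<in> W"
proof -
  obtain U where U: "open U" "W = cn n \<inter> U"
    using assms(1) unfolding cn_open_def openin_open by blast
  have "openin (product_topology (\<lambda>i. euclidean) UNIV) U" "a \<in> U"
    using U assms(2) by (auto simp: open_fun_def)
  then obtain B where B: "a \<in> (\<Pi>\<^sub>E i\<in>UNIV. B i)" "\<forall>i. open (B i)" "(\<Pi>\<^sub>E i\<in>UNIV. B i) \<subseteq> U"
    using product_topology_open_contains_basis[of "\<lambda>i. euclidean" UNIV U a] by auto
  have "\<exists>r>0. ball (a j) r \<subseteq> B j" for j
    using B(1,2) open_contains_ball[of "B j"] by (auto simp: PiE_iff)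
  then obtain rr where rr: "\<And>j. rr j > 0" "\<And>j. ball (a j) (rr j) \<subseteq> B j"
    by metis
  define r where "r = Min (rr ` {..<n} \<union> {1})"
  have "r > 0" unfolding r_def using rr(1) by (subst Min_gr_iff) auto
  moreover have "z \<in> W" if z: "z \<in> cn n" "\<forall>j<n. cmod (z j - a j) < r" for z
  proof -
    have "z j \<in> B j" for j
    proof (cases "j < n")
      case True
      then have "r \<le> rr j" unfolding r_def by (intro Min_le) auto
      with True z(2) show ?thesis
        using rr(2) by (force simp: dist_norm norm_minus_commute)
    next
      case False
      then have "z j = a j" using z(1) assms(2) U(2) by (auto simp: cn_def)
      then show ?thesis using B(1) by (simp add: PiE_iff)
    qed
    then show ?thesis using B(3) U(2) z(1) by (auto simp: PiE_iff)
  qed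
  ultimately show thesis by (rule that)
qed

lemma holo_fun_holomorphic_in_coordinate:
  assumes "holo_fun n W F" "i < n" "\<And>\<zeta>. \<zeta> \<in> S \<Longrightarrow> z(i := \<zeta>) \<in> W"
  shows "(\<lambda>\<zeta>. F (z(i := \<zeta>))) holomorphic_on S"
proof -
  have "(\<lambda>s. F ((z(i := \<zeta>))(i := s))) field_differentiable at ((z(i := \<zeta>)) i)" if "\<zeta> \<in> S" for \<zeta>
    using assms that unfolding holo_fun_def by blast
  then show ?thesis
    unfolding holomorphic_on_def by (simp add: field_differentiable_at_within)
qed

lemma holo_fun_subset: "holo_fun n W F \<Longrightarrow> cn_open n W' \<Longrightarrow> W' \<subseteq> W \<Longrightarrow> holo_fun n W' F"
  unfolding holo_fun_def by (auto intro: continuous_on_subset)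

section \<open>Separately holomorphic functions along holomorphic curves\<close>

lemma Cauchy_divided_difference:
  assumes "\<phi> holomorphic_on cball a \<rho>" "b \<in> ball a \<rho>"
  shows "\<phi> b - \<phi> a =
    (b - a) * (contour_integral (circlepath a \<rho>) (\<lambda>\<zeta>. \<phi> \<zeta> / ((\<zeta> - b) * (\<zeta> - a))) / (2 * pi * \<i>))"
proof (cases "b = a")
  case False
  have "\<rho> > 0" "cmod (b - a) < \<rho>"
    using assms(2) by (auto simp: dist_norm norm_minus_commute intro: le_less_trans[OF norm_ge_zero])
  then have "((\<lambda>\<zeta>. (\<phi> \<zeta> / (\<zeta> - b) - \<phi> \<zeta> / (\<zeta> - a)) / (b - a)) has_contour_integral
      (2 * pi * \<i> * \<phi> b - 2 * pi * \<i> * \<phi> a) / (b - a)) (circlepath a \<rho>)"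
    using Cauchy_integral_circlepath_simple[OF assms(1)]
    by (intro has_contour_integral_div has_contour_integral_diff) auto
  then have "((\<lambda>\<zeta>. \<phi> \<zeta> / ((\<zeta> - b) * (\<zeta> - a))) has_contour_integral
      (2 * pi * \<i> * \<phi> b - 2 * pi * \<i> * \<phi> a) / (b - a)) (circlepath a \<rho>)"
  proof (rule has_contour_integral_eq)
    fix \<zeta> assume "\<zeta> \<in> path_image (circlepath a \<rho>)"
    then have "\<zeta> \<noteq> a" "\<zeta> \<noteq> b"
      using \<open>\<rho> > 0\<close> \<open>cmod (b - a) < \<rho>\<close> by (auto simp: dist_norm norm_minus_commute)
    then have "\<phi> \<zeta> / (\<zeta> - b) - \<phi> \<zeta> / (\<zeta> - a) = (b - a) * (\<phi> \<zeta> / ((\<zeta> - b) * (\<zeta> - a)))"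
      by (simp add: field_simps)
    with False show "(\<phi> \<zeta> / (\<zeta> - b) - \<phi> \<zeta> / (\<zeta> - a)) / (b - a) = \<phi> \<zeta> / ((\<zeta> - b) * (\<zeta> - a))"
      by simp
  qed
  then have "contour_integral (circlepath a \<rho>) (\<lambda>\<zeta>. \<phi> \<zeta> / ((\<zeta> - b) * (\<zeta> - a))) =
      2 * pi * \<i> * (\<phi> b - \<phi> a) / (b - a)"
    by (simp add: contour_integral_unique right_diff_distrib)
  with False show ?thesis
    by simp
qed simp

lemma tendsto_contour_integral_circlepath_param:
  fixes G :: "'a::{heine_borel,perfect_space} \<Rightarrow> complex \<Rightarrow> complex"
  assumes cont: "continuous_on (cball t0 \<delta> \<times> sphere a \<rho>) (\<lambda>(t, \<zeta>). G t \<zeta>)"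
    and "\<delta> > 0" "\<rho> > 0"
  shows "((\<lambda>t. contour_integral (circlepath a \<rho>) (G t)) \<longlongrightarrow> contour_integral (circlepath a \<rho>) (G t0)) (at t0)"
proof (rule contour_integral_uniform_limit_circlepath(2))
  have near: "\<forall>\<^sub>F t in at t0. t \<in> cball t0 \<delta>"
    using \<open>\<delta> > 0\<close> unfolding eventually_at by (metis dist_commute less_eq_real_def mem_cball)
  have cont_G: "continuous_on (sphere a \<rho>) (G t)" if "t \<in> cball t0 \<delta>" for t
  proof -
    have "continuous_on (Pair t ` sphere a \<rho>) (\<lambda>(t, \<zeta>). G t \<zeta>)"
      by (rule continuous_on_subset[OF cont]) (use that in auto)
    then have "continuous_on (sphere a \<rho>) ((\<lambda>(t, \<zeta>). G t \<zeta>) \<circ> Pair t)"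
      by (intro continuous_on_compose continuous_intros)
    then show ?thesis by (simp add: o_def)
  qed
  show "\<forall>\<^sub>F t in at t0. G t contour_integrable_on circlepath a \<rho>"
    using near by (rule eventually_mono) (use cont_G \<open>\<rho> > 0\<close> in \<open>auto intro: contour_integrable_continuous_circlepath\<close>)
  have "uniformly_continuous_on (cball t0 \<delta> \<times> sphere a \<rho>) (\<lambda>(t, \<zeta>). G t \<zeta>)"
    using cont by (intro compact_uniformly_continuous compact_Times) auto
  show "uniform_limit (sphere a \<rho>) G (G t0) (at t0)"
    unfolding uniform_limit_iff
  proof (intro allI impI)
    fix e :: real assume "e > 0"
    then obtain d where d: "d > 0" "\<And>x x'. x \<in> cball t0 \<delta> \<times> sphere a \<rho> \<Longrightarrow> x' \<in> cball t0 \<delta> \<times> sphere a \<rho> \<Longrightarrow>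
        dist x' x < d \<Longrightarrow> dist (case x' of (t, \<zeta>) \<Rightarrow> G t \<zeta>) (case x of (t, \<zeta>) \<Rightarrow> G t \<zeta>) < e"
      using \<open>uniformly_continuous_on _ _\<close> unfolding uniformly_continuous_on_def by metis
    have "\<forall>\<^sub>F t in at t0. dist t t0 < d"
      using \<open>d > 0\<close> eventually_at by blast
    then show "\<forall>\<^sub>F t in at t0. \<forall>\<zeta>\<in>sphere a \<rho>. dist (G t \<zeta>) (G t0 \<zeta>) < e"
      using near
    proof eventually_elim
      case (elim t)
      show ?case
      proof
        fix \<zeta> assume "\<zeta> \<in> sphere a \<rho>"
        moreover have "dist (t, \<zeta>) (t0, \<zeta>) = dist t t0"
          by (simp add: dist_Pair_Pair)
        ultimately show "dist (G t \<zeta>) (G t0 \<zeta>) < e"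
          using d(2)[of "(t0, \<zeta>)" "(t, \<zeta>)"] elim \<open>\<delta> > 0\<close> by simp
      qed
    qed
  qed
qed (use \<open>\<rho> > 0\<close> in auto)

(* Osgood's path from a to w: the first i coordinates are already those of w. *)
definition coord_splice :: "nat \<Rightarrow> (nat \<Rightarrow> 'a) \<Rightarrow> (nat \<Rightarrow> 'a) \<Rightarrow> nat \<Rightarrow> 'a" where
  "coord_splice i w a = (\<lambda>j. if j < i then w j else a j)"

lemma coord_splice_0 [simp]: "coord_splice 0 w a = a"
  by (simp add: coord_splice_def)

lemma coord_splice_Suc: "coord_splice (Suc i) w a = (coord_splice i w a)(i := w i)"
  by (auto simp: coord_splice_def)

lemma coord_splice_upd_self [simp]: "(coord_splice i w a)(i := a i) = coord_splice i w a"
  by (auto simp: coord_splice_def)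

lemma coord_splice_cn: "w \<in> cn n \<Longrightarrow> a \<in> cn n \<Longrightarrow> coord_splice i w a \<in> cn n"
  by (simp add: coord_splice_def cn_def)

lemma coord_splice_full: "w \<in> cn n \<Longrightarrow> a \<in> cn n \<Longrightarrow> coord_splice n w a = w"
  by (auto simp: coord_splice_def cn_def)

lemma coord_splice_upd_mem_polydisc:
  assumes polydisc: "\<And>z. z \<in> cn n \<Longrightarrow> \<forall>j<n. cmod (z j - a j) < r \<Longrightarrow> z \<in> W"
    and "w \<in> cn n" "a \<in> cn n" "i < n"
    and near: "\<And>j. j < n \<Longrightarrow> cmod (w j - a j) < \<rho>" and "cmod (\<zeta> - a i) \<le> \<rho>" "\<rho> < r"
  shows "(coord_splice i w a)(i := \<zeta>) \<in> W"
proof (rule polydisc)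
  show "(coord_splice i w a)(i := \<zeta>) \<in> cn n"
    using assms(2-4) by (simp add: cn_fun_upd coord_splice_cn)
  have "0 < r"
    using near[OF \<open>i < n\<close>] \<open>\<rho> < r\<close> norm_ge_zero[of "w i - a i"] by linarith
  show "\<forall>j<n. cmod (((coord_splice i w a)(i := \<zeta>)) j - a j) < r"
  proof (intro allI impI)
    fix j assume "j < n"
    then show "cmod (((coord_splice i w a)(i := \<zeta>)) j - a j) < r"
      using near[of j] \<open>0 < r\<close> \<open>cmod (\<zeta> - a i) \<le> \<rho>\<close> \<open>\<rho> < r\<close> by (auto simp: coord_splice_def)
  qed
qed

lemma holo_fun_telescope:
  assumes F: "holo_fun n W F" and "a \<in> cn n" "w \<in> cn n"
    and polydisc: "\<And>z. z \<in> cn n \<Longrightarrow> \<forall>j<n. cmod (z j - a j) < r \<Longrightarrow> z \<in> W"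
    and near: "\<And>j. j < n \<Longrightarrow> cmod (w j - a j) < \<rho>" and "\<rho> < r"
  shows "F w - F a = (\<Sum>i<n. (w i - a i) * (contour_integral (circlepath (a i) \<rho>)
    (\<lambda>\<zeta>. F ((coord_splice i w a)(i := \<zeta>)) / ((\<zeta> - w i) * (\<zeta> - a i))) / (2 * pi * \<i>)))"
proof -
  have "F w - F a = (\<Sum>i<n. F (coord_splice (Suc i) w a) - F (coord_splice i w a))"
    using sum_lessThan_telescope[of "\<lambda>i. F (coord_splice i w a)" n] assms(2,3)
    by (simp add: coord_splice_full)
  also have "\<dots> = (\<Sum>i<n. (w i - a i) * (contour_integral (circlepath (a i) \<rho>)
      (\<lambda>\<zeta>. F ((coord_splice i w a)(i := \<zeta>)) / ((\<zeta> - w i) * (\<zeta> - a i))) / (2 * pi * \<i>)))"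
  proof (rule sum.cong[OF refl])
    fix i assume "i \<in> {..<n}"
    then have "i < n" by simp
    have "(coord_splice i w a)(i := \<zeta>) \<in> W" if "\<zeta> \<in> cball (a i) \<rho>" for \<zeta>
      using coord_splice_upd_mem_polydisc[OF polydisc assms(3,2) \<open>i < n\<close> near _ \<open>\<rho> < r\<close>] that
      by (simp add: dist_norm norm_minus_commute)
    then have "(\<lambda>\<zeta>. F ((coord_splice i w a)(i := \<zeta>))) holomorphic_on cball (a i) \<rho>"
      by (rule holo_fun_holomorphic_in_coordinate[OF F \<open>i < n\<close>])
    moreover have "w i \<in> ball (a i) \<rho>"
      using near[OF \<open>i < n\<close>] by (simp add: dist_norm norm_minus_commute)
    ultimately show "F (coord_splice (Suc i) w a) - F (coord_splice i w a) = (w i - a i) *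
        (contour_integral (circlepath (a i) \<rho>)
          (\<lambda>\<zeta>. F ((coord_splice i w a)(i := \<zeta>)) / ((\<zeta> - w i) * (\<zeta> - a i))) / (2 * pi * \<i>))"
      using Cauchy_divided_difference by (fastforce simp: coord_splice_Suc)
  qed
  finally show ?thesis .
qed

lemma continuous_on_coord_splice_integrand:
  fixes h :: "'a::topological_space \<Rightarrow> nat \<Rightarrow> complex" and F :: "(nat \<Rightarrow> complex) \<Rightarrow> complex"
  assumes F: "continuous_on W F" and "i < n"
    and h: "\<And>j. j < n \<Longrightarrow> continuous_on C (\<lambda>t. h t j)"
    and inW: "\<And>t \<zeta>. t \<in> C \<Longrightarrow> \<zeta> \<in> sphere (a i) \<rho> \<Longrightarrow> (coord_splice i (h t) a)(i := \<zeta>) \<in> W"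
    and inside: "\<And>t. t \<in> C \<Longrightarrow> h t i \<in> ball (a i) \<rho>"
  shows "continuous_on (C \<times> sphere (a i) \<rho>)
    (\<lambda>(t, \<zeta>). F ((coord_splice i (h t) a)(i := \<zeta>)) / ((\<zeta> - h t i) * (\<zeta> - a i)))"
proof -
  have h_fst: "continuous_on (C \<times> sphere (a i) \<rho>) (\<lambda>x. h (fst x) j)" if "j < n" for j
    by (rule continuous_on_compose2[OF h[OF that] continuous_on_fst[OF continuous_on_id]]) auto
  have "continuous_on (C \<times> sphere (a i) \<rho>) (\<lambda>x. (coord_splice i (h (fst x)) a)(i := snd x))"
  proof (intro continuous_on_coordinatewise_then_product)
    fix j
    show "continuous_on (C \<times> sphere (a i) \<rho>) (\<lambda>x. ((coord_splice i (h (fst x)) a)(i := snd x)) j)"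
      using h_fst[of j] \<open>i < n\<close>
      by (cases "j = i"; cases "j < i") (auto simp: coord_splice_def continuous_on_snd continuous_on_const)
  qed
  then have "continuous_on (C \<times> sphere (a i) \<rho>) (\<lambda>x. F ((coord_splice i (h (fst x)) a)(i := snd x)))"
    by (rule continuous_on_compose2[OF F]) (auto intro: inW)
  moreover have "\<forall>x\<in>C \<times> sphere (a i) \<rho>. (snd x - h (fst x) i) * (snd x - a i) \<noteq> 0"
    using inside by (force simp: dist_norm norm_minus_commute)
  ultimately show ?thesis
    unfolding case_prod_beta
    by (intro continuous_on_divide continuous_on_mult continuous_on_diff h_fst \<open>i < n\<close>
        continuous_on_snd continuous_on_const continuous_on_id)
qed

lemma tendsto_coord_splice_integral:
  fixes h :: "complex \<Rightarrow> nat \<Rightarrow> complex"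
  assumes F: "continuous_on W F"
    and polydisc: "\<And>z. z \<in> cn n \<Longrightarrow> \<forall>j<n. cmod (z j - a j) < r \<Longrightarrow> z \<in> W"
    and "a \<in> cn n" "i < n" "\<delta> > 0" "\<rho> > 0" "\<rho> < r" and h_cn: "\<And>t. h t \<in> cn n"
    and h_cont: "\<And>j. j < n \<Longrightarrow> continuous_on (cball t0 \<delta>) (\<lambda>t. h t j)"
    and near: "\<And>t j. t \<in> cball t0 \<delta> \<Longrightarrow> j < n \<Longrightarrow> cmod (h t j - a j) < \<rho>"
  shows "((\<lambda>t. contour_integral (circlepath (a i) \<rho>)
      (\<lambda>\<zeta>. F ((coord_splice i (h t) a)(i := \<zeta>)) / ((\<zeta> - h t i) * (\<zeta> - a i)))) \<longlongrightarrow>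
    contour_integral (circlepath (a i) \<rho>)
      (\<lambda>\<zeta>. F ((coord_splice i (h t0) a)(i := \<zeta>)) / ((\<zeta> - h t0 i) * (\<zeta> - a i)))) (at t0)"
proof (rule tendsto_contour_integral_circlepath_param[OF _ \<open>\<delta> > 0\<close> \<open>\<rho> > 0\<close>])
  show "continuous_on (cball t0 \<delta> \<times> sphere (a i) \<rho>)
      (\<lambda>(t, \<zeta>). F ((coord_splice i (h t) a)(i := \<zeta>)) / ((\<zeta> - h t i) * (\<zeta> - a i)))"
  proof (rule continuous_on_coord_splice_integrand[OF F \<open>i < n\<close> h_cont])
    show "h t i \<in> ball (a i) \<rho>" if "t \<in> cball t0 \<delta>" for t
      using near[OF that \<open>i < n\<close>] by (simp add: dist_norm norm_minus_commute)
    show "(coord_splice i (h t) a)(i := \<zeta>) \<in> W" if "t \<in> cball t0 \<delta>" "\<zeta> \<in> sphere (a i) \<rho>" for t \<zeta>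
      using coord_splice_upd_mem_polydisc[OF polydisc h_cn \<open>a \<in> cn n\<close> \<open>i < n\<close> near[OF that(1)] _ \<open>\<rho> < r\<close>]
        that(2) by (simp add: dist_norm norm_minus_commute)
  qed
qed

lemma continuous_on_coordinates_cball_near:
  fixes h :: "'a::metric_space \<Rightarrow> nat \<Rightarrow> 'b::metric_space"
  assumes "open T" "t0 \<in> T" and h_cont: "\<And>j. j < n \<Longrightarrow> continuous_on T (\<lambda>t. h t j)" and "\<rho> > 0"
  obtains \<delta> where "\<delta> > 0" and "\<And>t. t \<in> cball t0 \<delta> \<Longrightarrow> t \<in> T \<and> (\<forall>j<n. dist (h t j) (h t0 j) < \<rho>)"
proof -
  have "\<forall>\<^sub>F t in nhds t0. t \<in> T \<and> (\<forall>j\<in>{..<n}. dist (h t j) (h t0 j) < \<rho>)"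
  proof (intro eventually_conj eventually_ball_finite ballI)
    show "\<forall>\<^sub>F t in nhds t0. t \<in> T" using \<open>open T\<close> \<open>t0 \<in> T\<close> eventually_nhds_in_open by blast
    fix j assume "j \<in> {..<n}"
    then have "isCont (\<lambda>t. h t j) t0"
      using h_cont \<open>open T\<close> \<open>t0 \<in> T\<close> continuous_on_eq_continuous_at by auto
    then have "((\<lambda>t. h t j) \<longlongrightarrow> h t0 j) (nhds t0)"
      using tendsto_at_iff_tendsto_nhds[of "\<lambda>t. h t j" t0] by (simp add: isCont_def)
    then show "\<forall>\<^sub>F t in nhds t0. dist (h t j) (h t0 j) < \<rho>"
      using \<open>\<rho> > 0\<close> unfolding tendsto_iff by blast
  qed simp
  then obtain d where "d > 0" and d: "\<And>t. dist t t0 < d \<Longrightarrow> t \<in> T \<and> (\<forall>j<n. dist (h t j) (h t0 j) < \<rho>)"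
    unfolding eventually_nhds_metric by auto
  show thesis
  proof (rule that)
    show "d / 2 > 0" using \<open>d > 0\<close> by simp
    show "t \<in> T \<and> (\<forall>j<n. dist (h t j) (h t0 j) < \<rho>)" if "t \<in> cball t0 (d / 2)" for t
      using d[of t] that \<open>d > 0\<close> by (simp add: dist_commute)
  qed
qed

lemma field_differentiable_divided_differences:
  fixes f :: "complex \<Rightarrow> complex"
  assumes eq: "\<forall>\<^sub>F t in at t0. f t - f t0 = (\<Sum>i<n. (h i t - h i t0) * c i t)"
    and h: "\<And>i. i < n \<Longrightarrow> h i field_differentiable at t0"
    and c: "\<And>i. i < n \<Longrightarrow> (c i \<longlongrightarrow> c i t0) (at t0)"
  shows "f field_differentiable at t0"
proof -
  have "((\<lambda>t. (f t - f t0) / (t - t0)) \<longlongrightarrow> (\<Sum>i<n. deriv (h i) t0 * c i t0)) (at t0)"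
  proof (rule Lim_transform_eventually)
    show "((\<lambda>t. \<Sum>i<n. (h i t - h i t0) / (t - t0) * c i t) \<longlongrightarrow> (\<Sum>i<n. deriv (h i) t0 * c i t0)) (at t0)"
      using h c by (intro tendsto_intros)
        (auto simp: DERIV_deriv_iff_field_differentiable[symmetric] has_field_derivative_iff)
    show "\<forall>\<^sub>F t in at t0. (\<Sum>i<n. (h i t - h i t0) / (t - t0) * c i t) = (f t - f t0) / (t - t0)"
      using eq by (rule eventually_mono) (simp add: sum_divide_distrib)
  qed
  then show ?thesis
    unfolding field_differentiable_def has_field_derivative_iff by blast
qed

lemma holo_fun_comp_curve_field_differentiable:
  fixes h :: "complex \<Rightarrow> nat \<Rightarrow> complex"
  assumes F: "holo_fun n W F" and "h t0 \<in> W" and h_cn: "\<And>t. h t \<in> cn n"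
    and "open T" "t0 \<in> T" and h_cont: "\<And>j. j < n \<Longrightarrow> continuous_on T (\<lambda>t. h t j)"
    and h_diff: "\<And>j. j < n \<Longrightarrow> (\<lambda>t. h t j) field_differentiable (at t0)"
  shows "(\<lambda>t. F (h t)) field_differentiable (at t0)"
proof -
  define a where "a = h t0"
  have "a \<in> cn n"
    using h_cn by (simp add: a_def)
  obtain r where "r > 0" and polydisc: "\<And>z. z \<in> cn n \<Longrightarrow> \<forall>j<n. cmod (z j - a j) < r \<Longrightarrow> z \<in> W"
    using cn_open_contains_polydisc F \<open>h t0 \<in> W\<close> unfolding holo_fun_def a_def by metis
  define \<rho> where "\<rho> = r / 2"
  have "\<rho> > 0" "\<rho> < r" using \<open>r > 0\<close> by (auto simp: \<rho>_def)
  obtain \<delta> where "\<delta> > 0" and near: "\<And>t. t \<in> cball t0 \<delta> \<Longrightarrow> t \<in> T \<and> (\<forall>j<n. dist (h t j) (a j) < \<rho>)"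
    using continuous_on_coordinates_cball_near[where h = h and n = n, OF \<open>open T\<close> \<open>t0 \<in> T\<close> h_cont \<open>\<rho> > 0\<close>]
    unfolding a_def by blast
  define K where "K i t = contour_integral (circlepath (a i) \<rho>)
    (\<lambda>\<zeta>. F ((coord_splice i (h t) a)(i := \<zeta>)) / ((\<zeta> - h t i) * (\<zeta> - a i)))" for i t
  have telescope: "F (h t) - F (h t0) = (\<Sum>i<n. (h t i - h t0 i) * (K i t / (2 * pi * \<i>)))"
    if "t \<in> cball t0 \<delta>" for t
    using holo_fun_telescope[OF F h_cn h_cn polydisc _ \<open>\<rho> < r\<close>] near[OF that]
    unfolding K_def a_def by (auto simp: dist_norm)
  have K_lim: "(K i \<longlongrightarrow> K i t0) (at t0)" if "i < n" for i
    unfolding K_def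
  proof (rule tendsto_coord_splice_integral[OF _ polydisc \<open>a \<in> cn n\<close> that \<open>\<delta> > 0\<close> \<open>\<rho> > 0\<close> \<open>\<rho> < r\<close> h_cn])
    show "continuous_on W F" using F unfolding holo_fun_def by blast
    show "continuous_on (cball t0 \<delta>) (\<lambda>t. h t j)" if "j < n" for j
      using continuous_on_subset[OF h_cont[OF that]] near by blast
    show "cmod (h t j - a j) < \<rho>" if "t \<in> cball t0 \<delta>" "j < n" for t j
      using near[OF that(1)] that(2) by (simp add: dist_norm)
  qed
  have "\<forall>\<^sub>F t in at t0. t \<in> cball t0 \<delta>"
    using \<open>\<delta> > 0\<close> unfolding eventually_at by (metis dist_commute less_eq_real_def mem_cball)
  then have "\<forall>\<^sub>F t in at t0. F (h t) - F (h t0) = (\<Sum>i<n. (h t i - h t0 i) * (K i t / (2 * pi * \<i>)))"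
    by (rule eventually_mono) (rule telescope)
  then show ?thesis
  proof (rule field_differentiable_divided_differences[where c = "\<lambda>i t. K i t / (2 * pi * \<i>)"])
    show "((\<lambda>t. K i t / (2 * pi * \<i>)) \<longlongrightarrow> K i t0 / (2 * pi * \<i>)) (at t0)" if "i < n" for i
      using K_lim[OF that] by (intro tendsto_intros) auto
  qed (rule h_diff)
qed

section \<open>Holomorphic maps between subsets of \<open>\<complex>\<^sup>n\<close>\<close>

lemma holo_fun_compose:
  assumes F: "holo_fun m W F" and "cn_open n U"
    and G: "\<And>j. j < m \<Longrightarrow> holo_fun n U (G j)"
    and into: "\<And>z. z \<in> U \<Longrightarrow> (\<lambda>j. if j < m then G j z else 0) \<in> W"
  shows "holo_fun n U (\<lambda>z. F (\<lambda>j. if j < m then G j z else 0))"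
proof -
  have G_cont: "continuous_on U (G j)" if "j < m" for j
    using G[OF that] unfolding holo_fun_def by blast
  have F_cont: "continuous_on W F"
    using F unfolding holo_fun_def by blast
  have "continuous_on U (\<lambda>z j. if j < m then G j z else 0)"
  proof (intro continuous_on_coordinatewise_then_product)
    show "continuous_on U (\<lambda>z. if j < m then G j z else 0)" for j
      by (cases "j < m") (simp_all add: G_cont continuous_on_const)
  qed
  then have cont: "continuous_on U (\<lambda>z. F (\<lambda>j. if j < m then G j z else 0))"
    by (rule continuous_on_compose2[OF F_cont]) (auto intro: into)
  have "(\<lambda>t. F (\<lambda>j. if j < m then G j (z(i := t)) else 0)) field_differentiable at (z i)"
    if "z \<in> U" "i < n" for z i
  proof (rule holo_fun_comp_curve_field_differentiable[OF F])
    have "z \<in> cn n" using cn_open_subset[OF \<open>cn_open n U\<close>] \<open>z \<in> U\<close> by blast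
    show "open {t. z(i := t) \<in> U}"
      by (rule open_fun_upd_preimage[OF \<open>cn_open n U\<close> \<open>z \<in> cn n\<close> \<open>i < n\<close>])
    show "continuous_on {t. z(i := t) \<in> U} (\<lambda>t. if j < m then G j (z(i := t)) else 0)" for j
    proof (cases "j < m")
      case True
      have "continuous_on {t. z(i := t) \<in> U} (\<lambda>t. G j (z(i := t)))"
        by (rule continuous_on_compose2[OF G_cont[OF True] continuous_on_fun_upd_line]) auto
      with True show ?thesis by simp
    qed (simp add: continuous_on_const)
    show "(\<lambda>t. if j < m then G j (z(i := t)) else 0) field_differentiable at (z i)" if "j < m" for j
      using G[OF that] \<open>z \<in> U\<close> \<open>i < n\<close> that unfolding holo_fun_def by simp
  qed (use into \<open>z \<in> U\<close> in \<open>auto simp: cn_def\<close>)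
  with cont \<open>cn_open n U\<close> show ?thesis
    unfolding holo_fun_def by blast
qed


lemma holo_on_set_subset:
  assumes "holo_on_set n S g" "S' \<subseteq> S"
  shows "holo_on_set n S' g"
  unfolding holo_on_set_def
proof
  fix z assume "z \<in> S'"
  then obtain W F where "z \<in> W" "holo_fun n W F" "\<forall>w\<in>W \<inter> S. g w = F w"
    using assms unfolding holo_on_set_def by blast
  with assms(2) show "\<exists>W F. z \<in> W \<and> holo_fun n W F \<and> (\<forall>w\<in>W \<inter> S'. g w = F w)"
    by blast
qed

lemma holo_map_subset: "holo_map n S m g \<Longrightarrow> S' \<subseteq> S \<Longrightarrow> holo_map n S' m g"
  unfolding holo_map_def using holo_on_set_subset by blast

lemma holo_on_set_cong: "holo_on_set n S f \<Longrightarrow> (\<And>z. z \<in> S \<Longrightarrow> f z = f' z) \<Longrightarrow> holo_on_set n S f'"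
  unfolding holo_on_set_def by (metis IntD2)

lemma holo_on_set_local:
  assumes "\<And>z. z \<in> S \<Longrightarrow> \<exists>V. open V \<and> z \<in> V \<and> holo_on_set n (S \<inter> V) g"
  shows "holo_on_set n S g"
  unfolding holo_on_set_def
proof
  fix z assume "z \<in> S"
  then obtain V where "open V" "z \<in> V" "holo_on_set n (S \<inter> V) g"
    using assms by blast
  then obtain W F where "z \<in> W" "holo_fun n W F" "\<forall>w\<in>W \<inter> (S \<inter> V). g w = F w"
    using \<open>z \<in> S\<close> unfolding holo_on_set_def by blast
  moreover have "holo_fun n (W \<inter> V) F"
    using \<open>holo_fun n W F\<close> \<open>open V\<close> holo_fun_subset[OF _ cn_open_Int_open]
    unfolding holo_fun_def by blast
  ultimately show "\<exists>W F. z \<in> W \<and> holo_fun n W F \<and> (\<forall>w\<in>W \<inter> S. g w = F w)"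
    using \<open>z \<in> V\<close> by blast
qed

lemma holo_map_local_representation:
  assumes g: "holo_map n S m g" and "S \<subseteq> cn n" "z0 \<in> S"
  obtains U G where "z0 \<in> U" "cn_open n U" "\<And>j. j < m \<Longrightarrow> holo_fun n U (G j)"
    "\<And>w. w \<in> U \<Longrightarrow> w \<in> S \<Longrightarrow> g w = (\<lambda>j. if j < m then G j w else 0)"
proof -
  have "\<forall>j. \<exists>W F. j < m \<longrightarrow> z0 \<in> W \<and> holo_fun n W F \<and> (\<forall>w\<in>W \<inter> S. g w j = F w)"
    using g \<open>z0 \<in> S\<close> unfolding holo_map_def holo_on_set_def by blast
  then obtain W where "\<forall>j. \<exists>F. j < m \<longrightarrow> z0 \<in> W j \<and> holo_fun n (W j) F \<and> (\<forall>w\<in>W j \<inter> S. g w j = F w)"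
    by (rule choice[THEN exE])
  then obtain G where W: "\<And>j. j < m \<Longrightarrow> z0 \<in> W j \<and> holo_fun n (W j) (G j) \<and> (\<forall>w\<in>W j \<inter> S. g w j = G j w)"
    by (rule choice[THEN exE]) blast
  define U where "U = (\<Inter>j\<in>{..<m}. W j) \<inter> cn n"
  have "openin (top_of_set (cn n)) ((\<Inter>j\<in>{..<m}. W j) \<inter> topspace (top_of_set (cn n)))"
    using W by (intro openin_INT) (auto simp: holo_fun_def cn_open_def)
  then have "cn_open n U"
    by (simp add: U_def cn_open_def)
  show thesis
  proof (rule that)
    show "z0 \<in> U" using W \<open>z0 \<in> S\<close> \<open>S \<subseteq> cn n\<close> unfolding U_def by auto
    show "cn_open n U" by fact
    show "holo_fun n U (G j)" if "j < m" for j
    proof -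
      have "U \<subseteq> W j" using that by (auto simp: U_def)
      then show ?thesis
        using W[OF that] holo_fun_subset[OF _ \<open>cn_open n U\<close>] by blast
    qed
    show "g w = (\<lambda>j. if j < m then G j w else 0)" if "w \<in> U" "w \<in> S" for w
    proof
      fix j
      have "g w \<in> cn m" using g \<open>w \<in> S\<close> by (simp add: holo_map_def)
      then show "g w j = (if j < m then G j w else 0)"
        using W[of j] that unfolding U_def cn_def by auto
    qed
  qed
qed

(* S \<subseteq> cn n cannot be dropped: for m = 0 the hypothesis holo_map n S 0 g says nothing about S. *)
lemma holo_on_set_compose:
  assumes "S \<subseteq> cn n" and g: "holo_map n S m g" and k: "holo_on_set m S' k" and "g ` S \<subseteq> S'"
  shows "holo_on_set n S (\<lambda>z. k (g z))"
  unfolding holo_on_set_def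
proof
  fix z0 assume "z0 \<in> S"
  obtain U G where "z0 \<in> U" "cn_open n U" and G: "\<And>j. j < m \<Longrightarrow> holo_fun n U (G j)"
    and g_eq: "\<And>w. w \<in> U \<Longrightarrow> w \<in> S \<Longrightarrow> g w = (\<lambda>j. if j < m then G j w else 0)"
    using holo_map_local_representation[OF g \<open>S \<subseteq> cn n\<close> \<open>z0 \<in> S\<close>] by blast
  obtain W F where "g z0 \<in> W" and F: "holo_fun m W F" and k_eq: "\<forall>w\<in>W \<inter> S'. k w = F w"
    using k assms(4) \<open>z0 \<in> S\<close> unfolding holo_on_set_def by blast
  define \<Phi> where "\<Phi> w = (\<lambda>j. if j < m then G j w else 0)" for w
  have "continuous_on U \<Phi>"
    unfolding \<Phi>_def
  proof (intro continuous_on_coordinatewise_then_product)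
    show "continuous_on U (\<lambda>w. if j < m then G j w else 0)" for j
      using G by (cases "j < m") (simp_all add: holo_fun_def continuous_on_const)
  qed
  moreover have "\<Phi> \<in> U \<rightarrow> cn m"
    by (simp add: \<Phi>_def cn_def)
  moreover have "openin (top_of_set (cn m)) W"
    using F by (simp add: holo_fun_def cn_open_def)
  ultimately have "openin (top_of_set U) (U \<inter> \<Phi> -` W)"
    by (rule continuous_openin_preimage)
  then have U'_open: "cn_open n (U \<inter> \<Phi> -` W)"
    using \<open>cn_open n U\<close> unfolding cn_open_def by (rule openin_trans)
  have G_U': "holo_fun n (U \<inter> \<Phi> -` W) (G j)" if "j < m" for j
    using G[OF that] U'_open by (rule holo_fun_subset) blast
  show "\<exists>W F. z0 \<in> W \<and> holo_fun n W F \<and> (\<forall>w\<in>W \<inter> S. k (g w) = F w)"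
  proof (intro exI conjI)
    show "z0 \<in> U \<inter> \<Phi> -` W"
      using \<open>z0 \<in> U\<close> \<open>z0 \<in> S\<close> \<open>g z0 \<in> W\<close> g_eq by (simp add: \<Phi>_def)
    have "holo_fun n (U \<inter> \<Phi> -` W) (\<lambda>w. F (\<lambda>j. if j < m then G j w else 0))"
    proof (rule holo_fun_compose[OF F U'_open G_U'])
      fix w assume "w \<in> U \<inter> \<Phi> -` W"
      then show "(\<lambda>j. if j < m then G j w else 0) \<in> W"
        unfolding \<Phi>_def by simp
    qed
    then show "holo_fun n (U \<inter> \<Phi> -` W) (\<lambda>w. F (\<Phi> w))"
      by (simp add: \<Phi>_def)
    show "\<forall>w\<in>(U \<inter> \<Phi> -` W) \<inter> S. k (g w) = F (\<Phi> w)"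
      using g_eq k_eq assms(4) by (auto simp: \<Phi>_def)
  qed
qed


section \<open>Holomorphic maps between complex spaces\<close>

lemma cspace_chartD:
  assumes "is_cspace Y" "(U, \<phi>, n, D, A) \<in> catlas Y"
  shows "openin (ctop Y) U" "homeomorphic_map (subtopology (ctop Y) U) (top_of_set A) \<phi>"
    "inj_on \<phi> U" "\<phi> ` U = A" "A \<subseteq> cn n"
proof -
  have U: "openin (ctop Y) U" and hom: "homeomorphic_map (subtopology (ctop Y) U) (top_of_set A) \<phi>"
    and "analytic_set n D A"
    using assms unfolding is_cspace_def by fastforce+
  show "openin (ctop Y) U" "homeomorphic_map (subtopology (ctop Y) U) (top_of_set A) \<phi>"
    by (fact U hom)+
  have "topspace (subtopology (ctop Y) U) = U"
    using \<open>openin (ctop Y) U\<close> openin_subset by fastforce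
  then show "inj_on \<phi> U" "\<phi> ` U = A"
    using homeomorphic_imp_injective_map[OF hom] homeomorphic_imp_surjective_map[OF hom] by auto
  show "A \<subseteq> cn n"
    using \<open>analytic_set n D A\<close> cn_open_subset unfolding analytic_set_def by blast
qed

lemma cspace_chart_at:
  assumes "is_cspace Y" "y \<in> cpts Y"
  obtains U \<phi> n D A where "(U, \<phi>, n, D, A) \<in> catlas Y" "y \<in> U"
  using assms unfolding is_cspace_def by fastforce

lemma cspace_chart_image_open:
  assumes Y: "is_cspace Y" and ch: "(U, \<phi>, n, D, A) \<in> catlas Y" and "openin (ctop Y) N" "N \<subseteq> U"
  obtains V where "open V" "\<And>M. M \<subseteq> U \<Longrightarrow> \<phi> ` M \<inter> V = \<phi> ` (M \<inter> N)"
proof -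
  have "openin (subtopology (ctop Y) U) N"
    unfolding openin_subtopology using assms(3,4) by blast
  then have "openin (top_of_set A) (\<phi> ` N)"
    using homeomorphic_imp_open_map[OF cspace_chartD(2)[OF Y ch]] unfolding open_map_def by blast
  then obtain V where "open V" and N_image: "\<phi> ` N = A \<inter> V"
    unfolding openin_open by blast
  show thesis
  proof (rule that[OF \<open>open V\<close>])
    fix M assume "M \<subseteq> U"
    then have "\<phi> ` M \<subseteq> A"
      using cspace_chartD(4)[OF Y ch] by blast
    then have "\<phi> ` M \<inter> V = \<phi> ` M \<inter> \<phi> ` N"
      using N_image by blast
    also have "\<dots> = \<phi> ` (M \<inter> N)"
      using inj_on_image_Int[OF cspace_chartD(3)[OF Y ch] \<open>M \<subseteq> U\<close> \<open>N \<subseteq> U\<close>] by simp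
    finally show "\<phi> ` M \<inter> V = \<phi> ` (M \<inter> N)" .
  qed
qed

lemma hol_map_on_into:
  assumes "hol_map_on Y Om Z g" "y \<in> Om"
  shows "g y \<in> cpts Z"
proof -
  have "openin (ctop Y) Om" "continuous_map (subtopology (ctop Y) Om) (ctop Z) g"
    using assms(1) by (simp_all add: hol_map_on_def)
  then show ?thesis
    using assms(2) openin_subset by (fastforce simp: continuous_map_def)
qed


lemma hol_map_on_preimage_open:
  assumes "hol_map_on Y Om Z g" "openin (ctop Z) V"
  shows "openin (ctop Y) {y \<in> Om. g y \<in> V}"
proof -
  have Om: "openin (ctop Y) Om" and cont: "continuous_map (subtopology (ctop Y) Om) (ctop Z) g"
    using assms(1) by (simp_all add: hol_map_on_def)
  have "topspace (subtopology (ctop Y) Om) = Om"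
    using openin_subset[OF Om] by auto
  then have "openin (subtopology (ctop Y) Om) {y \<in> Om. g y \<in> V}"
    using openin_continuous_map_preimage[OF cont assms(2)] by simp
  then show ?thesis
    using Om by (rule openin_trans_full)
qed

lemma cspace_chart_inv:
  assumes "is_cspace Y" "(U, \<phi>, n, D, A) \<in> catlas Y" "y \<in> U"
  shows "inv_into U \<phi> (\<phi> y) = y"
  using cspace_chartD(3)[OF assms(1,2)] assms(3) by simp

lemma hol_map_on_compose_chart_into:
  assumes Y: "is_cspace Y" and Z: "is_cspace Z"
    and g: "hol_map_on Y O1 Z g" and k: "hol_map_on Z O2 W k"
    and chY: "(U, \<phi>, n, D, A) \<in> catlas Y" and chW: "(V, \<psi>, p, E, B) \<in> catlas W"
    and "y \<in> U" "y \<in> O1" "g y \<in> O2" "k (g y) \<in> V"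
  shows "\<psi> (k (g (inv_into U \<phi> (\<phi> y)))) \<in> cn p"
proof -
  obtain Uz pz nz Dz Az where chZ: "(Uz, pz, nz, Dz, Az) \<in> catlas Z" "g y \<in> Uz"
    using cspace_chart_at[OF Z hol_map_on_into[OF g \<open>y \<in> O1\<close>]] by blast
  have "holo_map nz (pz ` {w \<in> Uz \<inter> O2. k w \<in> V}) p (\<lambda>w. \<psi> (k (inv_into Uz pz w)))"
    using k chW chZ(1) unfolding hol_map_on_def by fastforce
  then have "\<psi> (k (inv_into Uz pz (pz (g y)))) \<in> cn p"
    using chZ(2) assms(9,10) unfolding holo_map_def by blast
  then show ?thesis
    using cspace_chart_inv[OF Z chZ] cspace_chart_inv[OF Y chY \<open>y \<in> U\<close>] by simp
qed

lemma hol_map_on_compose_chart_holo: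
  assumes Y: "is_cspace Y" and Z: "is_cspace Z"
    and g: "hol_map_on Y O1 Z g" and k: "hol_map_on Z O2 W k"
    and chY: "(U, \<phi>, n, D, A) \<in> catlas Y" and chW: "(V, \<psi>, p, E, B) \<in> catlas W"
    and chZ: "(Uz, pz, nz, Dz, Az) \<in> catlas Z" and "i < p"
  shows "holo_on_set n (\<phi> ` {y \<in> U \<inter> O1. g y \<in> Uz \<and> g y \<in> O2 \<and> k (g y) \<in> V})
    (\<lambda>z. \<psi> (k (g (inv_into U \<phi> z))) i)"
proof -
  define S where "S = \<phi> ` {y \<in> U \<inter> O1. g y \<in> Uz \<and> g y \<in> O2 \<and> k (g y) \<in> V}"
  have inv: "inv_into U \<phi> (\<phi> y) = y" if "y \<in> U" for y
    using cspace_chart_inv[OF Y chY that] .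
  have composite: "holo_on_set n S (\<lambda>z. \<psi> (k (inv_into Uz pz (pz (g (inv_into U \<phi> z))))) i)"
  proof (rule holo_on_set_compose[where g = "\<lambda>z. pz (g (inv_into U \<phi> z))"
        and k = "\<lambda>w. \<psi> (k (inv_into Uz pz w)) i"])
    show "S \<subseteq> cn n"
      using cspace_chartD(4,5)[OF Y chY] by (auto simp: S_def)
    have "holo_map n (\<phi> ` {y \<in> U \<inter> O1. g y \<in> Uz}) nz (\<lambda>z. pz (g (inv_into U \<phi> z)))"
      using g chY chZ unfolding hol_map_on_def by fastforce
    then show "holo_map n S nz (\<lambda>z. pz (g (inv_into U \<phi> z)))"
      by (rule holo_map_subset) (auto simp: S_def)
    have "holo_map nz (pz ` {w \<in> Uz \<inter> O2. k w \<in> V}) p (\<lambda>w. \<psi> (k (inv_into Uz pz w)))"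
      using k chW chZ unfolding hol_map_on_def by fastforce
    then show "holo_on_set nz (pz ` {w \<in> Uz \<inter> O2. k w \<in> V}) (\<lambda>w. \<psi> (k (inv_into Uz pz w)) i)"
      using \<open>i < p\<close> unfolding holo_map_def by blast
    show "(\<lambda>z. pz (g (inv_into U \<phi> z))) ` S \<subseteq> pz ` {w \<in> Uz \<inter> O2. k w \<in> V}"
      using inv by (auto simp: S_def)
  qed
  have "inv_into Uz pz (pz (g (inv_into U \<phi> z))) = g (inv_into U \<phi> z)" if "z \<in> S" for z
    using that inv cspace_chart_inv[OF Z chZ] by (auto simp: S_def)
  then show ?thesis
    unfolding S_def[symmetric] by (intro holo_on_set_cong[OF composite]) simp
qed

lemma hol_map_on_compose_chart:
  assumes Y: "is_cspace Y" and Z: "is_cspace Z"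
    and g: "hol_map_on Y O1 Z g" and k: "hol_map_on Z O2 W k"
    and chY: "(U, \<phi>, n, D, A) \<in> catlas Y" and chW: "(V, \<psi>, p, E, B) \<in> catlas W"
  shows "holo_map n (\<phi> ` {y \<in> U \<inter> {y \<in> O1. g y \<in> O2}. k (g y) \<in> V}) p
    (\<lambda>z. \<psi> (k (g (inv_into U \<phi> z))))"
proof -
  define M where "M = {y \<in> U \<inter> {y \<in> O1. g y \<in> O2}. k (g y) \<in> V}"
  have "holo_on_set n (\<phi> ` M) (\<lambda>z. \<psi> (k (g (inv_into U \<phi> z))) i)" if "i < p" for i
  proof (rule holo_on_set_local)
    fix z0 assume "z0 \<in> \<phi> ` M"
    then obtain y0 where y0: "z0 = \<phi> y0" "y0 \<in> M"
      by blast
    have "y0 \<in> O1"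
      using y0(2) by (simp add: M_def)
    then obtain Uz pz nz Dz Az where chZ: "(Uz, pz, nz, Dz, Az) \<in> catlas Z" "g y0 \<in> Uz"
      using cspace_chart_at[OF Z hol_map_on_into[OF g]] by blast
    define N where "N = {y \<in> U \<inter> O1. g y \<in> Uz}"
    have "openin (ctop Y) N"
      using openin_Int[OF cspace_chartD(1)[OF Y chY] hol_map_on_preimage_open[OF g cspace_chartD(1)[OF Z chZ(1)]]]
      by (simp add: N_def Collect_conj_eq Int_assoc)
    moreover have "N \<subseteq> U"
      by (auto simp: N_def)
    ultimately obtain V' where "open V'" and V': "\<And>M'. M' \<subseteq> U \<Longrightarrow> \<phi> ` M' \<inter> V' = \<phi> ` (M' \<inter> N)"
      using cspace_chart_image_open[OF Y chY] by blast
    have "\<phi> ` M \<inter> V' = \<phi> ` {y \<in> U \<inter> O1. g y \<in> Uz \<and> g y \<in> O2 \<and> k (g y) \<in> V}"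
      by (subst V') (auto simp: M_def N_def)
    then have "holo_on_set n (\<phi> ` M \<inter> V') (\<lambda>z. \<psi> (k (g (inv_into U \<phi> z))) i)"
      using hol_map_on_compose_chart_holo[OF Y Z g k chY chW chZ(1) \<open>i < p\<close>] by simp
    moreover have "z0 \<in> V'"
      using V'[of "{y0}"] y0 chZ(2) by (auto simp: M_def N_def)
    ultimately show "\<exists>V'. open V' \<and> z0 \<in> V' \<and> holo_on_set n (\<phi> ` M \<inter> V') (\<lambda>z. \<psi> (k (g (inv_into U \<phi> z))) i)"
      using \<open>open V'\<close> by blast
  qed
  moreover have "\<psi> (k (g (inv_into U \<phi> z))) \<in> cn p" if "z \<in> \<phi> ` M" for z
    using that hol_map_on_compose_chart_into[OF Y Z g k chY chW] by (auto simp: M_def)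
  ultimately show ?thesis
    unfolding holo_map_def M_def by blast
qed

lemma hol_map_on_compose:
  assumes Y: "is_cspace Y" and Z: "is_cspace Z"
    and g: "hol_map_on Y O1 Z g" and k: "hol_map_on Z O2 W k"
  shows "hol_map_on Y {y \<in> O1. g y \<in> O2} W (\<lambda>y. k (g y))"
  unfolding hol_map_on_def
proof (intro conjI)
  have g_cont: "continuous_map (subtopology (ctop Y) O1) (ctop Z) g"
    and k_cont: "continuous_map (subtopology (ctop Z) O2) (ctop W) k" and "openin (ctop Z) O2"
    using g k by (simp_all add: hol_map_on_def)
  then show "openin (ctop Y) {y \<in> O1. g y \<in> O2}"
    using hol_map_on_preimage_open[OF g] by blast
  have "continuous_map (subtopology (ctop Y) {y \<in> O1. g y \<in> O2}) (subtopology (ctop Z) O2) g"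
    by (rule continuous_map_into_subtopology[OF continuous_map_from_subtopology_mono[OF g_cont]]) auto
  then show "continuous_map (subtopology (ctop Y) {y \<in> O1. g y \<in> O2}) (ctop W) (\<lambda>y. k (g y))"
    using continuous_map_compose[OF _ k_cont] by (simp add: o_def)
  show "\<forall>(U, \<phi>, n, D, A)\<in>catlas Y. \<forall>(V, \<psi>, m, E, B)\<in>catlas W.
      holo_map n (\<phi> ` {y \<in> U \<inter> {y \<in> O1. g y \<in> O2}. k (g y) \<in> V}) m (\<lambda>z. \<psi> (k (g (inv_into U \<phi> z))))"
    using hol_map_on_compose_chart[OF Y Z g k] by fastforce
qed

lemma analytic_set_self: "cn_open n D \<Longrightarrow> analytic_set n D D"
  unfolding analytic_set_def by (intro conjI ballI exI[of _ D] exI[of _ "0::nat"]) auto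

lemma disc_chart_cn: "disc_chart t \<in> cn 1"
  by (simp add: disc_chart_def cn_def)

lemma disc_chart_0 [simp]: "disc_chart t 0 = t"
  by (simp add: disc_chart_def)

lemma inj_disc_chart: "inj disc_chart"
  by (metis injI disc_chart_0)

lemma cn_1_eq_disc_chart: "z \<in> cn 1 \<Longrightarrow> z = disc_chart (z 0)"
  by (auto simp: disc_chart_def cn_def)

lemma continuous_on_disc_chart: "continuous_on S disc_chart"
proof (intro continuous_on_coordinatewise_then_product)
  show "continuous_on S (\<lambda>t. disc_chart t i)" for i
    by (cases "i = 0") (simp_all add: disc_chart_def continuous_on_id continuous_on_const)
qed

lemma cn_open_disc_chart_image: "open V \<Longrightarrow> cn_open 1 (disc_chart ` V)"
proof -
  assume "open V"
  then have "open {z :: nat \<Rightarrow> complex. z 0 \<in> V}"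
    using open_vimage[OF _ continuous_on_product_coordinates[of 0]] by (simp add: vimage_def)
  moreover have "disc_chart ` V = cn 1 \<inter> {z. z 0 \<in> V}"
    using disc_chart_cn cn_1_eq_disc_chart by fastforce
  ultimately show ?thesis
    unfolding cn_open_def openin_open by blast
qed

lemma is_cspace_disc_space: "is_cspace disc_space"
proof -
  define B :: "complex set" where "B = ball 0 1"
  define D where "D = disc_chart ` B"
  have "homeomorphic_maps (top_of_set B) (top_of_set D) disc_chart (\<lambda>z. z 0)"
    unfolding homeomorphic_maps_def
    by (auto simp: D_def continuous_on_disc_chart
        intro: continuous_on_subset[OF continuous_on_product_coordinates])
  then have "homeomorphic_map (subtopology (top_of_set B) B) (top_of_set D) disc_chart"
    by (auto simp: homeomorphic_map_maps subtopology_subtopology)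
  moreover have "analytic_set 1 D D"
    unfolding D_def B_def by (intro analytic_set_self cn_open_disc_chart_image open_ball)
  moreover have "holo_map 1 D 1 (\<lambda>z. disc_chart (inv_into B disc_chart z))"
    unfolding holo_map_def
  proof (intro conjI ballI allI impI)
    show "disc_chart (inv_into B disc_chart z) \<in> cn 1" for z
      by (rule disc_chart_cn)
    fix i :: nat assume "i < 1"
    have "holo_fun 1 (cn 1) (\<lambda>w. w 0)"
      unfolding holo_fun_def cn_open_def
      by (auto intro: continuous_on_subset[OF continuous_on_product_coordinates])
    moreover have "disc_chart (inv_into B disc_chart w) i = w 0" if "w \<in> D" for w
      using that \<open>i < 1\<close> inj_on_subset[OF inj_disc_chart] by (auto simp: D_def)
    ultimately show "holo_on_set 1 D (\<lambda>z. disc_chart (inv_into B disc_chart z) i)"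
      unfolding holo_on_set_def D_def using disc_chart_cn by blast
  qed
  ultimately show ?thesis
    unfolding is_cspace_def disc_space_def B_def[symmetric] D_def[symmetric]
    by (simp add: Hausdorff_space_subtopology D_def[symmetric])
qed

section \<open>V-morphisms and the Kobayashi pseudo-distance\<close>

lemma V_morphism_compose_hol_map:
  assumes Y: "is_cspace Y" and Z: "is_cspace Z"
    and f: "V_morphism Y X I Ut \<pi> f" and g: "hol_map_on Z (cpts Z) Y g"
  shows "V_morphism Z X I Ut \<pi> (\<lambda>z. f (g z))"
  unfolding V_morphism_def
proof (intro conjI ballI)
  have into: "{z \<in> cpts Z. g z \<in> cpts Y} = cpts Z"
    using hol_map_on_into[OF g] by blast
  have "hol_map_on Y (cpts Y) X f"
    using f by (simp add: V_morphism_def)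
  from hol_map_on_compose[OF Z Y g this] show "hol_map_on Z (cpts Z) X (\<lambda>z. f (g z))"
    by (simp only: into)
  fix z assume "z \<in> cpts Z"
  then obtain Om \<alpha> \<tau> where lift: "g z \<in> Om" "\<alpha> \<in> I" "hol_map_on Y Om (Ut \<alpha>) \<tau>" "\<forall>y\<in>Om. f y = \<pi> \<alpha> (\<tau> y)"
    using f hol_map_on_into[OF g] unfolding V_morphism_def by blast
  show "\<exists>Om \<alpha> \<tau>. z \<in> Om \<and> \<alpha> \<in> I \<and> hol_map_on Z Om (Ut \<alpha>) \<tau> \<and> (\<forall>x\<in>Om. f (g x) = \<pi> \<alpha> (\<tau> x))"
  proof (intro exI conjI)
    show "z \<in> {x \<in> cpts Z. g x \<in> Om}" using \<open>z \<in> cpts Z\<close> lift(1) by blast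
    show "hol_map_on Z {x \<in> cpts Z. g x \<in> Om} (Ut \<alpha>) (\<lambda>x. \<tau> (g x))"
      by (rule hol_map_on_compose[OF Z Y g lift(3)])
    show "\<forall>x\<in>{x \<in> cpts Z. g x \<in> Om}. f (g x) = \<pi> \<alpha> (\<tau> (g x))" using lift(4) by blast
  qed (fact lift(2))
qed

lemma kob_chain_image:
  assumes "kob_chain P p q L" "\<And>g. P g \<Longrightarrow> Q (\<lambda>t. f (g t))"
  shows "kob_chain Q (f p) (f q) (map (\<lambda>(g, a, b). (\<lambda>t. f (g t), a, b)) L)"
  using assms unfolding kob_chain_def
  by (auto simp: hd_map last_map case_prod_beta)

lemma kob_dist_image_le:
  assumes "\<And>g. P g \<Longrightarrow> Q (\<lambda>t. f (g t))"
  shows "kob_dist Q (f p) (f q) \<le> kob_dist P p q"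
  unfolding kob_dist_def
proof (rule Inf_mono)
  fix d assume "d \<in> {ereal (\<Sum>(g, a, b)\<leftarrow>L. poincare_dist a b) |L. kob_chain P p q L}"
  then obtain L where d: "d = ereal (\<Sum>(g, a, b)\<leftarrow>L. poincare_dist a b)" and "kob_chain P p q L"
    by blast
  define L' where "L' = map (\<lambda>(g, a, b). (\<lambda>t. f (g t), a, b)) L"
  have "kob_chain Q (f p) (f q) L'"
    unfolding L'_def using \<open>kob_chain P p q L\<close> assms by (rule kob_chain_image)
  moreover have "(\<Sum>(g, a, b)\<leftarrow>L'. poincare_dist a b) = (\<Sum>(g, a, b)\<leftarrow>L. poincare_dist a b)"
    unfolding L'_def by (induct L) (auto simp: case_prod_beta)
  ultimately show "\<exists>d'\<in>{ereal (\<Sum>(g, a, b)\<leftarrow>L. poincare_dist a b) |L. kob_chain Q (f p) (f q) L}. d' \<le> d"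
    using d by auto
qed

theorem lemma3p4:
  fixes X :: "'a cspace" and Y :: "'b cspace" and I :: "'i set"
    and Ut :: "'i \<Rightarrow> 'u cspace" and G :: "'i \<Rightarrow> ('g, 'm) monoid_scheme"
    and act :: "'i \<Rightarrow> 'g \<Rightarrow> 'u \<Rightarrow> 'u" and \<pi> :: "'i \<Rightarrow> 'u \<Rightarrow> 'a"
    and f :: "'b \<Rightarrow> 'a"
  assumes "is_Vspace X I Ut G act \<pi>"
    and "is_cspace Y"
    and "V_morphism Y X I Ut \<pi> f"
    and "p \<in> cpts Y" and "q \<in> cpts Y" and "p \<noteq> q"
  shows "kobayashi_V X I Ut \<pi> (f p) (f q) \<le> kobayashi Y p q"
  unfolding kobayashi_V_def kobayashi_def
proof (rule kob_dist_image_le)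
  fix g assume "hol_map_on disc_space (ball 0 1) Y g"
  then show "V_morphism disc_space X I Ut \<pi> (\<lambda>t. f (g t))"
    using V_morphism_compose_hol_map[OF assms(2) is_cspace_disc_space assms(3)]
    by (simp add: disc_space_def)
qed

end
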